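(* Let $X$ and $Y$ be Hausdorff uniform spaces and $f\colon X\to Y$ a function generating the uniform structure of $Y$. (1) If $f$ satisfies conditions GP1 and GP2, then $\widetilde f\colon GP(X,x_0)\to GP(Y,f(x_0))$ is a uniform equivalence for each $x_0\in X$. (2) If $X$ is joinable and $\widetilde f\colon GP(X,x_1)\to GP(Y,f(x_1))$ is a uniform equivalence for some $x_1\in X$, then $f$ satisfies GP1 and GP2.
   Context: $f(E)=\{(f(x),f(y)):(x,y)\in E\}$; a surjection $f$ generates the uniform structure of its range if the sets $f(E)$ form a base of it. $R(X,E)$ is the Rips complex (vertex set $X$, simplices the finite $F$ with $F\times F\subset E$); $e(x,y)$ the edge-path; $f_E\colon R(X,E)\to R(Y,f(E))$ the induced simplicial map. Paths $c,d$ in $R(X,E)$ with end-points in $X$ are $E$-homotopic if their initial points $x_c,x_d$ and terminal points $y_c,y_d$ satisfy $(x_c,x_d),(y_c,y_d)\in E$ and $c\simeq e(x_c,x_d)\ast d\ast e(y_d,y_c)$ rel. end-points in $R(X,E)$. A generalized path from $x$ to $y$ is a family $\{[c_E]\}_E$ over all entourages of homotopy classes rel. end-points of paths from $x$ to $y$ in $R(X,E)$ with $c_F\simeq c_E$ in $R(X,E)$ for $F\subset E$. $GP(X,x_0)$ is the set of generalized paths starting at $x_0$ with the uniform structure with base $F^\ast=\{(c,d): c_F \text{ is } F\text{-homotopic to } d_F\}$; two generalized paths $c,d$ are called $F$-homotopic if $(c,d)\in F^\ast$. For uniformly continuous $f$, $\widetilde f\colon GP(X,x_0)\to GP(Y,f(x_0))$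 is defined by $\widetilde f(c)_F=[f_E(c_E)]$ with $E=f^{-1}(F)$. $X$ is joinable if any two points are joined by a generalized path. GP1: every generalized path in $Y$ starting at $f(x_0)$ equals $\widetilde f(d)$ for some generalized path $d$ in $X$ starting at $x_0$ (for every $x_0\in X$). GP2: for every entourage $E$ of $X$ there is an entourage $F$ of $X$ such that any two generalized paths $\alpha,\beta$ in $X$ with common origin are $E$-homotopic whenever $\widetilde f(\alpha)$ and $\widetilde f(\beta)$ are $f(F)$-homotopic. *)

theory Defs
  imports Complex_Main
begin

definition ent :: "('a::uniform_space \<times> 'a) set \<Rightarrow> bool" where
  "ent E \<longleftrightarrow> eventually (\<lambda>p. p \<in> E) uniformity"

definition pimg :: "('a \<Rightarrow> 'b) \<Rightarrow> ('a \<times> 'a) set \<Rightarrow> ('b \<times> 'b) set" where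
  "pimg f E = map_prod f f ` E"

definition pre :: "('a \<Rightarrow> 'b) \<Rightarrow> ('b \<times> 'b) set \<Rightarrow> ('a \<times> 'a) set" where
  "pre f F = {(x, y). (f x, f y) \<in> F}"

definition generates :: "('a::uniform_space \<Rightarrow> 'b::uniform_space) \<Rightarrow> bool" where
  "generates f \<longleftrightarrow> surj f \<and> (\<forall>E. ent E \<longrightarrow> ent (pimg f E))
     \<and> (\<forall>F. ent F \<longrightarrow> (\<exists>E. ent E \<and> pimg f E \<subseteq> F))"

text \<open>An edge path in R(X,E): a nonempty vertex list whose consecutive vertices span an edge
  (an edge {x,y} of R(X,E) requires {x,y} x {x,y} to be contained in E).\<close>
definition epath :: "('a \<times> 'a) set \<Rightarrow> 'a list \<Rightarrow> bool" where
  "epath E xs \<longleftrightarrow> xs \<noteq> [] \<and>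
     (\<forall>i. Suc i < length xs \<longrightarrow> {xs ! i, xs ! Suc i} \<times> {xs ! i, xs ! Suc i} \<subseteq> E)"

text \<open>Elementary edge-path moves (Spanier): repeat a vertex; replace a b c by a c when
  {a,b,c} is a simplex of R(X,E).\<close>
definition rips_move :: "('a \<times> 'a) set \<Rightarrow> ('a list \<times> 'a list) set" where
  "rips_move E =
     {(xs @ a # ys, xs @ a # a # ys) | xs a ys. True} \<union>
     {(xs @ a # b # c # ys, xs @ a # c # ys) | xs a b c ys. {a, b, c} \<times> {a, b, c} \<subseteq> E}"

definition rips_step :: "('a \<times> 'a) set \<Rightarrow> ('a list \<times> 'a list) set" where
  "rips_step E = {(p, q). (p, q) \<in> rips_move E \<union> (rips_move E)\<inverse> \<and> epath E p \<and> epath E q}"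

definition homot :: "('a \<times> 'a) set \<Rightarrow> 'a list \<Rightarrow> 'a list \<Rightarrow> bool" where
  "homot E p q \<longleftrightarrow> epath E p \<and> (p, q) \<in> (rips_step E)\<^sup>*"

text \<open>E-homotopy of paths: c is homotopic rel end-points to e(x_c,x_d) * d * e(y_d,y_c).\<close>
definition ehom :: "('a \<times> 'a) set \<Rightarrow> 'a list \<Rightarrow> 'a list \<Rightarrow> bool" where
  "ehom E c d \<longleftrightarrow> epath E c \<and> epath E d \<and>
     (hd c, hd d) \<in> E \<and> (last c, last d) \<in> E \<and>
     homot E c (hd c # d @ [last c])"

text \<open>A generalized path is a family E \<mapsto> [c_E] of homotopy classes (empty for
  non-entourages, so that equality of families is equality of generalized paths).\<close>
definition is_gpath :: "'a::uniform_space \<Rightarrow> 'a \<Rightarrow> (('a \<times> 'a) set \<Rightarrow> 'a list set) \<Rightarrow> bool" where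
  "is_gpath x y c \<longleftrightarrow>
     (\<forall>E. \<not> ent E \<longrightarrow> c E = {}) \<and>
     (\<forall>E. ent E \<longrightarrow> (\<exists>p. epath E p \<and> hd p = x \<and> last p = y \<and> c E = {q. homot E p q})) \<and>
     (\<forall>E F. ent E \<longrightarrow> ent F \<longrightarrow> F \<subseteq> E \<longrightarrow> c F \<subseteq> c E)"

definition GP :: "'a::uniform_space \<Rightarrow> (('a \<times> 'a) set \<Rightarrow> 'a list set) set" where
  "GP x0 = {c. \<exists>y. is_gpath x0 y c}"

definition joinable :: "'a::uniform_space itself \<Rightarrow> bool" where
  "joinable _ \<longleftrightarrow> (\<forall>x y :: 'a. \<exists>c. is_gpath x y c)"

definition gp_hom :: "('a \<times> 'a) set \<Rightarrow> (('a \<times> 'a) set \<Rightarrow> 'a list set) \<Rightarrow>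
    (('a \<times> 'a) set \<Rightarrow> 'a list set) \<Rightarrow> bool" where
  "gp_hom F c d \<longleftrightarrow> (\<exists>p q. p \<in> c F \<and> q \<in> d F \<and> ehom F p q)"

definition gp_map :: "('a::uniform_space \<Rightarrow> 'b::uniform_space) \<Rightarrow>
    (('a \<times> 'a) set \<Rightarrow> 'a list set) \<Rightarrow> (('b \<times> 'b) set \<Rightarrow> 'b list set)" where
  "gp_map f c = (\<lambda>F. if ent F then {q. \<exists>p \<in> c (pre f F). homot F (map f p) q} else {})"

definition gp_ucont :: "(('a::uniform_space \<times> 'a) set \<Rightarrow> 'a list set) set \<Rightarrow>
    ((('a \<times> 'a) set \<Rightarrow> 'a list set) \<Rightarrow> (('b::uniform_space \<times> 'b) set \<Rightarrow> 'b list set)) \<Rightarrow> bool" where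
  "gp_ucont S g \<longleftrightarrow> (\<forall>F. ent F \<longrightarrow> (\<exists>E. ent E \<and>
     (\<forall>c\<in>S. \<forall>d\<in>S. gp_hom E c d \<longrightarrow> gp_hom F (g c) (g d))))"

definition gp_uequiv :: "(('a::uniform_space \<times> 'a) set \<Rightarrow> 'a list set) set \<Rightarrow>
    (('b::uniform_space \<times> 'b) set \<Rightarrow> 'b list set) set \<Rightarrow>
    ((('a \<times> 'a) set \<Rightarrow> 'a list set) \<Rightarrow> (('b \<times> 'b) set \<Rightarrow> 'b list set)) \<Rightarrow> bool" where
  "gp_uequiv S T g \<longleftrightarrow> g ` S \<subseteq> T \<and> gp_ucont S g \<and>
     (\<exists>h. h ` T \<subseteq> S \<and> (\<forall>c\<in>S. h (g c) = c) \<and> (\<forall>d\<in>T. g (h d) = d) \<and> gp_ucont T h)"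

definition GP1 :: "('a::uniform_space \<Rightarrow> 'b::uniform_space) \<Rightarrow> bool" where
  "GP1 f \<longleftrightarrow> (\<forall>x0. \<forall>c \<in> GP (f x0). \<exists>d \<in> GP x0. gp_map f d = c)"

definition GP2 :: "('a::uniform_space \<Rightarrow> 'b::uniform_space) \<Rightarrow> bool" where
  "GP2 f \<longleftrightarrow> (\<forall>E. ent E \<longrightarrow> (\<exists>F. ent F \<and>
     (\<forall>x0. \<forall>\<alpha> \<in> GP x0. \<forall>\<beta> \<in> GP x0.
        gp_hom (pimg f F) (gp_map f \<alpha>) (gp_map f \<beta>) \<longrightarrow> gp_hom E \<alpha> \<beta>)))"

end

theory Submission
  imports Defs
begin

text \<open>
  The induced map f~ is uniformly continuous because f carries edge paths, edge-path moves and
  E-homotopies of R(X, f\<inverse>(F)) into R(Y, F). If f~(\<alpha>) = f~(\<beta>), these are F-homotopic for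
  every F, so by GP2 \<alpha> and \<beta> are E-homotopic for every E; as X is separated this forces
  \<alpha> = \<beta>. Hence under GP1 the map f~ is a bijection, and GP2 is exactly the uniform continuity
  of its inverse.

  Conversely, concatenating with a generalized path \<gamma> from x1 to x0 and with its
  reverse moves generalized paths between the base points x1 and x0; this commutes with
  f~ and preserves E-homotopy, and \<gamma>\<inverse>\<gamma>\<alpha> = \<alpha>. So surjectivity of f~ and uniform
  continuity of its inverse at x1 propagate to every base point, which gives GP1 and GP2
  (the entourage F chosen at x1 serves for all base points).
\<close>

section \<open>Edge paths in Rips complexes\<close>

lemma epath_Nil [simp]: "\<not> epath E []"
  by (simp add: epath_def)

lemma epath_singleton [simp]: "epath E [a]"
  by (simp add: epath_def)

lemma epath_Cons_Cons [simp]: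
  "epath E (a # b # xs) \<longleftrightarrow> {a, b} \<times> {a, b} \<subseteq> E \<and> epath E (b # xs)"
  by (auto simp: epath_def less_Suc_eq_0_disj)

lemma epath_append:
  assumes "xs \<noteq> []" "ys \<noteq> []"
  shows "epath E (xs @ ys) \<longleftrightarrow> epath E xs \<and> epath E ys \<and> {last xs, hd ys} \<times> {last xs, hd ys} \<subseteq> E"
  using assms by (induction xs rule: induct_list012) (auto simp: neq_Nil_conv)

lemma epath_rev [simp]: "epath E (rev xs) \<longleftrightarrow> epath E xs"
proof -
  have "epath E (rev xs)" if "epath E xs" for xs
    using that
  proof (induction xs rule: induct_list012)
    case (3 a b zs)
    then show ?case using epath_append[of "rev (b # zs)" "[a]" E] by auto
  qed auto
  from this[of xs] this[of "rev xs"] show ?thesis by auto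
qed

lemma epath_append_joined:
  "epath E p \<Longrightarrow> epath E q \<Longrightarrow> last p = hd q \<Longrightarrow> (hd q, hd q) \<in> E \<Longrightarrow> epath E (p @ q)"
  using epath_append[of p q E] by (cases "p = []"; cases "q = []") auto

lemma epath_mono: "epath E p \<Longrightarrow> E \<subseteq> E' \<Longrightarrow> epath E' p"
  unfolding epath_def by blast

lemma epath_map_pre: "epath (pre f F) p \<Longrightarrow> epath F (map f p)"
  unfolding epath_def pre_def by (auto simp: subset_iff)

lemma epath_replace_infix:
  assumes "epath E (u @ p @ v)" "epath E q" "p \<noteq> []" "q \<noteq> []" "hd q = hd p" "last q = last p"
  shows "epath E (u @ q @ v)"
proof -
  have "epath E (q @ v)"
    using assms epath_append[of p v] epath_append[of q v] epath_append[of u "p @ v"]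
    by (cases "u = []"; cases "v = []") auto
  then show ?thesis
    using assms epath_append[of u "p @ v"] epath_append[of u "q @ v"] by (cases "u = []") auto
qed

lemma epath_remove_repeat: "epath E (u @ a # a # v) \<Longrightarrow> epath E (u @ a # v)"
  using epath_replace_infix[of E u "[a, a]" v "[a]"] by simp

lemma epath_repeat: "epath E (u @ a # v) \<Longrightarrow> (a, a) \<in> E \<Longrightarrow> epath E (u @ a # a # v)"
  using epath_replace_infix[of E u "[a]" v "[a, a]"] by simp

lemma epath_infix: "epath E (u @ p @ v) \<Longrightarrow> p \<noteq> [] \<Longrightarrow> epath E p"
  using epath_append[of u "p @ v" E] epath_append[of p v E] by (cases "u = []"; cases "v = []") auto

lemma epath_repeat_refl: "epath E (u @ a # a # v) \<Longrightarrow> (a, a) \<in> E"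
  using epath_infix[of E u "[a, a]" v] by simp

lemma square_subset_pre_iff: "A \<times> A \<subseteq> pre f F \<longleftrightarrow> f ` A \<times> f ` A \<subseteq> F"
  unfolding pre_def by auto

lemma rips_move_repeatI: "(xs @ a # ys, xs @ a # a # ys) \<in> rips_move E"
  unfolding rips_move_def by blast

lemma rips_move_cornerI:
  "{a, b, c} \<times> {a, b, c} \<subseteq> E \<Longrightarrow> (xs @ a # b # c # ys, xs @ a # c # ys) \<in> rips_move E"
  unfolding rips_move_def by blast

lemma rips_move_cases:
  assumes "(p, q) \<in> rips_move E"
  obtains (repeat) xs a ys where "p = xs @ a # ys" "q = xs @ a # a # ys"
  | (corner) xs a b c ys where "p = xs @ a # b # c # ys" "q = xs @ a # c # ys"
      "{a, b, c} \<times> {a, b, c} \<subseteq> E"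
  using assms unfolding rips_move_def by blast

lemma rips_move_hd_last:
  assumes "(p, q) \<in> rips_move E"
  shows "p \<noteq> [] \<and> q \<noteq> [] \<and> hd q = hd p \<and> last q = last p"
  using assms by (cases rule: rips_move_cases) (simp_all add: hd_append)

lemma rips_move_mono:
  assumes "(p, q) \<in> rips_move E" and "E \<subseteq> E'"
  shows "(p, q) \<in> rips_move E'"
  using assms(1)
proof (cases rule: rips_move_cases)
  case (repeat xs a ys)
  show ?thesis unfolding repeat by (rule rips_move_repeatI)
next
  case (corner xs a b c ys)
  show ?thesis unfolding corner(1,2) using corner(3) assms(2) by (intro rips_move_cornerI) blast
qed

lemma rips_move_append_context:
  assumes "(p, q) \<in> rips_move E"
  shows "(u @ p @ v, u @ q @ v) \<in> rips_move E"
  using assms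
proof (cases rule: rips_move_cases)
  case (repeat xs a ys)
  show ?thesis using rips_move_repeatI[of "u @ xs" a "ys @ v" E] unfolding repeat by simp
next
  case (corner xs a b c ys)
  show ?thesis using rips_move_cornerI[of a b c E "u @ xs" "ys @ v"] corner(3) unfolding corner(1,2) by simp
qed

lemma rips_move_map_pre:
  assumes "(p, q) \<in> rips_move (pre f F)"
  shows "(map f p, map f q) \<in> rips_move F"
  using assms
proof (cases rule: rips_move_cases)
  case (repeat xs a ys)
  show ?thesis using rips_move_repeatI[of "map f xs" "f a" "map f ys" F] unfolding repeat by simp
next
  case (corner xs a b c ys)
  from corner(3) have "{f a, f b, f c} \<times> {f a, f b, f c} \<subseteq> F"
    using square_subset_pre_iff[of "{a, b, c}" f F] by simp
  then have "(map f xs @ f a # f b # f c # map f ys, map f xs @ f a # f c # map f ys) \<in> rips_move F"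
    by (rule rips_move_cornerI)
  then show ?thesis unfolding corner(1,2) by (simp only: map_append list.map)
qed

lemma rips_move_rev:
  assumes "(p, q) \<in> rips_move E"
  shows "(rev p, rev q) \<in> rips_move E"
  using assms
proof (cases rule: rips_move_cases)
  case (repeat xs a ys)
  show ?thesis using rips_move_repeatI[of "rev ys" a "rev xs" E] unfolding repeat by simp
next
  case (corner xs a b c ys)
  from corner(3) have "{c, b, a} \<times> {c, b, a} \<subseteq> E" by (simp add: insert_commute)
  then have "(rev ys @ c # b # a # rev xs, rev ys @ c # a # rev xs) \<in> rips_move E"
    by (rule rips_move_cornerI)
  then show ?thesis unfolding corner(1,2) by simp
qed

section \<open>Homotopy of edge paths\<close>

lemma rips_step_iff:
  "(p, q) \<in> rips_step E \<longleftrightarrow>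
     ((p, q) \<in> rips_move E \<or> (q, p) \<in> rips_move E) \<and> epath E p \<and> epath E q"
  unfolding rips_step_def by auto

lemma rips_step_converse [simp]: "(rips_step E)\<inverse> = rips_step E"
  by (auto simp: rips_step_iff)

lemma rips_step_hd_last:
  "(p, q) \<in> rips_step E \<Longrightarrow> epath E q \<and> hd q = hd p \<and> last q = last p"
  unfolding rips_step_iff by (metis rips_move_hd_last)

lemma homot_epath_hd_last:
  assumes "homot E p q"
  shows "epath E p \<and> epath E q \<and> hd q = hd p \<and> last q = last p"
proof -
  from assms have p: "epath E p" and "(p, q) \<in> (rips_step E)\<^sup>*"
    unfolding homot_def by blast+
  from this(2) show ?thesis
    by induction (use p rips_step_hd_last in auto)
qed

lemma homot_epath_right: "homot E p q \<Longrightarrow> epath E q"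
  using homot_epath_hd_last by blast

lemma homot_refl: "epath E p \<Longrightarrow> homot E p p"
  unfolding homot_def by simp

lemma homot_sym: "homot E p q \<Longrightarrow> homot E q p"
  using homot_epath_hd_last[of E p q] rtrancl_converseI[of p q "rips_step E"]
  unfolding homot_def by simp

lemma homot_trans [trans]: "homot E p q \<Longrightarrow> homot E q r \<Longrightarrow> homot E p r"
  unfolding homot_def by auto

lemma homot_of_rips_move:
  "(p, q) \<in> rips_move E \<Longrightarrow> epath E p \<Longrightarrow> epath E q \<Longrightarrow> homot E p q"
  unfolding homot_def by (blast intro: rips_step_iff[THEN iffD2])

lemma homot_transfer:
  assumes move: "\<And>p q. (p, q) \<in> rips_move E \<Longrightarrow> (\<phi> p, \<phi> q) \<in> rips_move E'"
    and path: "\<And>p. epath E p \<Longrightarrow> epath E' (\<phi> p)"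
    and "homot E p q"
  shows "homot E' (\<phi> p) (\<phi> q)"
proof -
  from assms(3) have "epath E p" and "(p, q) \<in> (rips_step E)\<^sup>*"
    unfolding homot_def by blast+
  from this(2) have "(\<phi> p, \<phi> q) \<in> (rips_step E')\<^sup>*"
  proof induction
    case (step y z)
    then have "(\<phi> y, \<phi> z) \<in> rips_step E'"
      using move path unfolding rips_step_iff by blast
    with step.IH show ?case by simp
  qed simp
  with \<open>epath E p\<close> path show ?thesis unfolding homot_def by blast
qed

lemma homot_mono: "homot E p q \<Longrightarrow> E \<subseteq> E' \<Longrightarrow> homot E' p q"
  using homot_transfer[where \<phi> = id, OF rips_move_mono epath_mono] by simp

lemma homot_map_pre: "homot (pre f F) p q \<Longrightarrow> homot F (map f p) (map f q)"
  by (rule homot_transfer[OF rips_move_map_pre epath_map_pre])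

lemma homot_rev: "homot E p q \<Longrightarrow> homot E (rev p) (rev q)"
  by (rule homot_transfer[OF rips_move_rev]) simp_all

lemma homot_append_context:
  assumes "homot E p q" and "epath E (u @ p @ v)"
  shows "homot E (u @ p @ v) (u @ q @ v)"
proof -
  from assms(1) have "(p, q) \<in> (rips_step E)\<^sup>*" unfolding homot_def by blast
  then have "(u @ p @ v, u @ q @ v) \<in> (rips_step E)\<^sup>* \<and> epath E (u @ q @ v)"
  proof induction
    case (step y z)
    have z: "epath E z" "hd z = hd y" "last z = last y"
      using rips_step_hd_last[OF step.hyps(2)] by auto
    have "y \<noteq> []" "z \<noteq> []"
      using step.hyps(2) unfolding rips_step_iff by auto
    with step.IH z have "epath E (u @ z @ v)"
      using epath_replace_infix[of E u y v z] by simp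
    moreover have "(u @ y @ v, u @ z @ v) \<in> rips_step E"
      using step.hyps(2) step.IH calculation rips_move_append_context unfolding rips_step_iff by blast
    ultimately show ?case using step.IH by auto
  qed (simp add: assms(2))
  with assms(2) show ?thesis unfolding homot_def by blast
qed

lemma homot_append:
  assumes "homot E p p'" "homot E q q'" "epath E (p @ q)"
  shows "homot E (p @ q) (p' @ q')"
proof -
  have "homot E ([] @ p @ q) ([] @ p' @ q)"
    using homot_append_context[of E p p' "[]" q] assms(1,3) by simp
  moreover from this have "homot E (p' @ q @ []) (p' @ q' @ [])"
    using homot_append_context[of E q q' p' "[]"] assms(2) homot_epath_right[of E "p @ q"] by simp
  ultimately show ?thesis using homot_trans by simp
qed

lemma homot_repeat:
  "epath E (u @ a # v) \<Longrightarrow> (a, a) \<in> E \<Longrightarrow> homot E (u @ a # v) (u @ a # a # v)"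
  by (rule homot_of_rips_move[OF rips_move_repeatI _ epath_repeat])

lemma homot_remove_repeat: "epath E (u @ a # a # v) \<Longrightarrow> homot E (u @ a # a # v) (u @ a # v)"
  by (rule homot_sym, rule homot_repeat[OF epath_remove_repeat epath_repeat_refl])

lemma homot_remove_corner:
  assumes "epath E (u @ a # b # c # v)" "{a, b, c} \<times> {a, b, c} \<subseteq> E"
  shows "homot E (u @ a # b # c # v) (u @ a # c # v)"
proof (rule homot_of_rips_move[OF rips_move_cornerI[OF assms(2)] assms(1)])
  have "{a, c} \<times> {a, c} \<subseteq> E" using assms(2) by blast
  then show "epath E (u @ a # c # v)"
    using epath_replace_infix[of E u "[a, b, c]" v "[a, c]"] assms(1) by simp
qed

lemma homot_rev_append_self:
  assumes refl: "\<And>x. (x, x) \<in> E"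
  shows "epath E r \<Longrightarrow> homot E (rev r @ r) [last r]"
proof (induction r rule: induct_list012)
  case (2 a)
  show ?case using homot_remove_repeat[of E "[]" a "[]"] refl by simp
next
  case (3 a b zs)
  then have ab: "{a, b} \<times> {a, b} \<subseteq> E" and bzs: "epath E (b # zs)" by auto
  have "epath E (rev (a # b # zs))" using "3.prems" by (simp only: epath_rev)
  then have "epath E (rev (a # b # zs) @ a # b # zs)"
    by (rule epath_append_joined) (use "3.prems" refl in auto)
  then have "homot E (rev (a # b # zs) @ a # b # zs) (rev zs @ b # a # b # zs)"
    using homot_remove_repeat[of E "rev zs @ [b]" a "b # zs"] by simp
  also have "homot E \<dots> (rev zs @ b # b # zs)"
    using homot_remove_corner[of E "rev zs" b a b zs] homot_epath_right[OF calculation] ab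
    by (auto simp: insert_commute)
  also have "homot E \<dots> [last (a # b # zs)]"
    using "3.IH"(2) bzs by simp
  finally show ?case .
qed simp

lemma homot_pad_ends:
  assumes "epath E p" "(hd p, hd p) \<in> E" "(last p, last p) \<in> E"
  shows "homot E p (hd p # p @ [last p])"
proof -
  from assms(1) have "p \<noteq> []" by auto
  then have p: "p = [] @ hd p # tl p" by simp
  define ys where "ys = butlast (hd p # p)"
  have ys: "hd p # p = ys @ [last p]"
    unfolding ys_def using append_butlast_last_id[of "hd p # p"] \<open>p \<noteq> []\<close> by simp
  have "homot E p (ys @ [last p])"
    using homot_repeat[of E "[]" "hd p" "tl p"] assms p ys by simp
  also have "homot E \<dots> (ys @ [last p, last p])"
    using homot_repeat[of E ys "last p" "[]"] homot_epath_right[OF calculation] assms(3) by simp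
  also have "ys @ [last p, last p] = hd p # p @ [last p]"
    using arg_cong[OF ys, of "\<lambda>l. l @ [last p]"] by simp
  finally show ?thesis .
qed

lemma ent_refl: "ent E \<Longrightarrow> (x, x) \<in> E"
  unfolding ent_def using uniformity_refl[of "\<lambda>p. p \<in> E"] by simp

lemma ent_mono: "ent E \<Longrightarrow> E \<subseteq> F \<Longrightarrow> ent F"
  unfolding ent_def by (auto elim: eventually_mono)

lemma ent_pre:
  assumes "generates f" "ent F"
  shows "ent (pre f F)"
proof -
  from assms obtain E where "ent E" "pimg f E \<subseteq> F" unfolding generates_def by blast
  moreover from this(2) have "E \<subseteq> pre f F" unfolding pimg_def pre_def by auto
  ultimately show ?thesis using ent_mono by blast
qed

lemma ent_pimg: "generates f \<Longrightarrow> ent E \<Longrightarrow> ent (pimg f E)"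
  unfolding generates_def by blast

lemma ent_separating:
  fixes x y :: "'a::{uniform_space, t1_space}"
  assumes "x \<noteq> y"
  obtains E where "ent E" "(x, y) \<notin> E"
proof -
  obtain U where U: "open U" "x \<in> U" "y \<notin> U" using t1_space[OF assms] by blast
  then have "ent {(x', z). x' = x \<longrightarrow> z \<in> U}"
    unfolding ent_def open_uniformity by (simp add: case_prod_beta')
  with U show thesis using that by blast
qed

section \<open>Generalized paths\<close>

definition homot_class :: "('a \<times> 'a) set \<Rightarrow> 'a list \<Rightarrow> 'a list set" where
  "homot_class E p = {q. homot E p q}"

lemma homot_class_self: "epath E p \<Longrightarrow> p \<in> homot_class E p"
  unfolding homot_class_def by (simp add: homot_refl)

lemma homot_class_eq: "homot E p q \<Longrightarrow> homot_class E p = homot_class E q"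
  unfolding homot_class_def using homot_sym homot_trans by blast

lemma homot_class_mono: "E \<subseteq> E' \<Longrightarrow> homot_class E p \<subseteq> homot_class E' p"
  unfolding homot_class_def using homot_mono by blast

lemma is_gpath_memD:
  assumes "is_gpath x y c" "ent E" "q \<in> c E"
  shows "epath E q \<and> hd q = x \<and> last q = y \<and> c E = homot_class E q"
proof -
  obtain p where p: "epath E p" "hd p = x" "last p = y" "c E = {q. homot E p q}"
    using assms(1,2) unfolding is_gpath_def by blast
  with assms(3) have pq: "homot E p q" by simp
  have "c E = homot_class E q"
    using p(4) homot_class_eq[OF pq] unfolding homot_class_def by simp
  with p homot_epath_hd_last[OF pq] show ?thesis by simp
qed

lemma is_gpath_nonempty:
  assumes "is_gpath x y c" "ent E"
  obtains p where "p \<in> c E"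
proof -
  from assms obtain p where p: "epath E p" "c E = {q. homot E p q}"
    unfolding is_gpath_def by meson
  show thesis using that[of p] p homot_refl[OF p(1)] by simp
qed

lemma is_gpath_mono:
  assumes "is_gpath x y c" "ent F" "F \<subseteq> E"
  shows "c F \<subseteq> c E"
proof -
  have "ent E" using assms(2,3) by (rule ent_mono)
  with assms show ?thesis unfolding is_gpath_def by simp
qed

lemma is_gpath_eqI:
  assumes "is_gpath x y c" "is_gpath x' y' d"
    and "\<And>E. ent E \<Longrightarrow> \<exists>p \<in> c E. \<exists>q \<in> d E. homot E p q"
  shows "c = d"
proof
  fix E show "c E = d E"
  proof (cases "ent E")
    case True
    then obtain p q where "p \<in> c E" "q \<in> d E" and pq: "homot E p q" using assms(3) by blast
    with True have "c E = homot_class E p" "d E = homot_class E q"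
      using is_gpath_memD[OF assms(1)] is_gpath_memD[OF assms(2)] by blast+
    with homot_class_eq[OF pq] show ?thesis by simp
  next
    case False
    with assms(1,2) show ?thesis unfolding is_gpath_def by simp
  qed
qed

lemma mem_GP_iff: "c \<in> GP x0 \<longleftrightarrow> (\<exists>y. is_gpath x0 y c)"
  unfolding GP_def by simp

lemma gp_map_eq_homot_class:
  assumes f: "generates f" and c: "is_gpath x y c" and F: "ent F" and p: "p \<in> c (pre f F)"
  shows "gp_map f c F = homot_class F (map f p)"
proof -
  have p': "epath (pre f F) p" "c (pre f F) = homot_class (pre f F) p"
    using is_gpath_memD[OF c ent_pre[OF f F] p] by simp_all
  have "gp_map f c F = {q. \<exists>p' \<in> homot_class (pre f F) p. homot F (map f p') q}"
    unfolding gp_map_def using F p'(2) by simp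
  also have "\<dots> = homot_class F (map f p)"
  proof
    show "{q. \<exists>p' \<in> homot_class (pre f F) p. homot F (map f p') q} \<subseteq> homot_class F (map f p)"
      unfolding homot_class_def using homot_map_pre homot_trans by blast
    show "homot_class F (map f p) \<subseteq> {q. \<exists>p' \<in> homot_class (pre f F) p. homot F (map f p') q}"
      using homot_class_self[OF p'(1)] unfolding homot_class_def by blast
  qed
  finally show ?thesis .
qed

lemma map_mem_gp_map:
  assumes "generates f" "is_gpath x y c" "ent F" "p \<in> c (pre f F)"
  shows "map f p \<in> gp_map f c F"
proof -
  have "epath (pre f F) p" using is_gpath_memD[OF assms(2) ent_pre[OF assms(1,3)] assms(4)] by simp
  then show ?thesis
    unfolding gp_map_eq_homot_class[OF assms] by (intro homot_class_self epath_map_pre)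
qed

lemma is_gpath_gp_map:
  fixes f :: "'a::uniform_space \<Rightarrow> 'b::uniform_space"
  assumes f: "generates f" and c: "is_gpath x y c"
  shows "is_gpath (f x) (f y) (gp_map f c)"
  unfolding is_gpath_def
proof (intro conjI allI impI)
  fix F :: "('b \<times> 'b) set"
  assume "\<not> ent F"
  then show "gp_map f c F = {}" unfolding gp_map_def by simp
next
  fix F :: "('b \<times> 'b) set"
  assume F: "ent F"
  obtain p where p: "p \<in> c (pre f F)" using is_gpath_nonempty[OF c ent_pre[OF f F]] .
  then have "epath (pre f F) p" "hd p = x" "last p = y"
    using is_gpath_memD[OF c ent_pre[OF f F] p] by simp_all
  moreover from this(1) have "p \<noteq> []" by auto
  ultimately show "\<exists>q. epath F q \<and> hd q = f x \<and> last q = f y \<and> gp_map f c F = {r. homot F q r}"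
    using gp_map_eq_homot_class[OF f c F p] epath_map_pre unfolding homot_class_def
    by (intro exI[of _ "map f p"]) (simp add: hd_map last_map)
next
  fix E F :: "('b \<times> 'b) set"
  assume E: "ent E" and F: "ent F" and FE: "F \<subseteq> E"
  obtain p where p: "p \<in> c (pre f F)" using is_gpath_nonempty[OF c ent_pre[OF f F]] .
  have "pre f F \<subseteq> pre f E" using FE unfolding pre_def by auto
  then have "p \<in> c (pre f E)" using is_gpath_mono[OF c ent_pre[OF f F]] p by blast
  then show "gp_map f c F \<subseteq> gp_map f c E"
    using gp_map_eq_homot_class[OF f c F p] gp_map_eq_homot_class[OF f c E] homot_class_mono[OF FE]
    by simp
qed

definition gp_cat ::
    "(('a::uniform_space \<times> 'a) set \<Rightarrow> 'a list set) \<Rightarrow> (('a \<times> 'a) set \<Rightarrow> 'a list set) \<Rightarrow>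
     (('a \<times> 'a) set \<Rightarrow> 'a list set)" where
  "gp_cat c d = (\<lambda>E. if ent E then {r. \<exists>p \<in> c E. \<exists>q \<in> d E. homot E (p @ q) r} else {})"

definition gp_rev :: "(('a \<times> 'a) set \<Rightarrow> 'a list set) \<Rightarrow> (('a \<times> 'a) set \<Rightarrow> 'a list set)" where
  "gp_rev c = (\<lambda>E. rev ` c E)"

lemma gp_cat_eq_homot_class:
  assumes c: "is_gpath x y c" and d: "is_gpath y z d" and E: "ent E"
    and p: "p \<in> c E" and q: "q \<in> d E"
  shows "epath E (p @ q) \<and> gp_cat c d E = homot_class E (p @ q)"
proof -
  have p': "epath E p" "last p = y" "c E = homot_class E p" using is_gpath_memD[OF c E p] by simp_all
  have q': "epath E q" "hd q = y" "d E = homot_class E q" using is_gpath_memD[OF d E q] by simp_all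
  have pq: "epath E (p @ q)" using epath_append_joined[OF p'(1) q'(1)] p' q' ent_refl[OF E] by simp
  have "gp_cat c d E = {r. \<exists>p' \<in> homot_class E p. \<exists>q' \<in> homot_class E q. homot E (p' @ q') r}"
    unfolding gp_cat_def using E p'(3) q'(3) by simp
  also have "\<dots> = homot_class E (p @ q)"
  proof
    show "{r. \<exists>p' \<in> homot_class E p. \<exists>q' \<in> homot_class E q. homot E (p' @ q') r}
        \<subseteq> homot_class E (p @ q)"
      unfolding homot_class_def using homot_append[OF _ _ pq] homot_trans by blast
    show "homot_class E (p @ q)
        \<subseteq> {r. \<exists>p' \<in> homot_class E p. \<exists>q' \<in> homot_class E q. homot E (p' @ q') r}"
      using homot_class_self[OF p'(1)] homot_class_self[OF q'(1)] unfolding homot_class_def by blast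
  qed
  finally show ?thesis using pq by simp
qed

lemma append_mem_gp_cat:
  assumes "is_gpath x y c" "is_gpath y z d" "ent E" "p \<in> c E" "q \<in> d E"
  shows "p @ q \<in> gp_cat c d E"
  using gp_cat_eq_homot_class[OF assms] homot_class_self by blast

lemma is_gpath_gp_cat:
  fixes c :: "('a::uniform_space \<times> 'a) set \<Rightarrow> 'a list set"
  assumes c: "is_gpath x y c" and d: "is_gpath y z d"
  shows "is_gpath x z (gp_cat c d)"
  unfolding is_gpath_def
proof (intro conjI allI impI)
  fix E :: "('a \<times> 'a) set"
  assume "\<not> ent E"
  then show "gp_cat c d E = {}" unfolding gp_cat_def by simp
next
  fix E :: "('a \<times> 'a) set"
  assume E: "ent E"
  obtain p q where p: "p \<in> c E" and q: "q \<in> d E"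
    using is_gpath_nonempty[OF c E] is_gpath_nonempty[OF d E] by metis
  have "hd p = x" "last q = z" "p \<noteq> []" "q \<noteq> []"
    using is_gpath_memD[OF c E p] is_gpath_memD[OF d E q] by auto
  then show "\<exists>r. epath E r \<and> hd r = x \<and> last r = z \<and> gp_cat c d E = {s. homot E r s}"
    using gp_cat_eq_homot_class[OF c d E p q] unfolding homot_class_def
    by (intro exI[of _ "p @ q"]) simp
next
  fix E F :: "('a \<times> 'a) set"
  assume E: "ent E" and F: "ent F" and FE: "F \<subseteq> E"
  obtain p q where p: "p \<in> c F" and q: "q \<in> d F"
    using is_gpath_nonempty[OF c F] is_gpath_nonempty[OF d F] by metis
  then have "p \<in> c E" "q \<in> d E" using is_gpath_mono[OF c F FE] is_gpath_mono[OF d F FE] by auto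
  then show "gp_cat c d F \<subseteq> gp_cat c d E"
    using gp_cat_eq_homot_class[OF c d F p q] gp_cat_eq_homot_class[OF c d E]
      homot_class_mono[OF FE] by simp
qed

lemma gp_rev_eq_homot_class:
  assumes c: "is_gpath x y c" and E: "ent E" and p: "p \<in> c E"
  shows "gp_rev c E = homot_class E (rev p)"
proof -
  have "rev ` homot_class E p = homot_class E (rev p)"
  proof
    show "rev ` homot_class E p \<subseteq> homot_class E (rev p)"
      unfolding homot_class_def using homot_rev by blast
    show "homot_class E (rev p) \<subseteq> rev ` homot_class E p"
    proof
      fix r assume "r \<in> homot_class E (rev p)"
      then have "rev r \<in> homot_class E p"
        unfolding homot_class_def using homot_rev[of E "rev p" r] by simp
      then show "r \<in> rev ` homot_class E p" by (metis image_eqI rev_rev_ident)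
    qed
  qed
  then show ?thesis unfolding gp_rev_def using is_gpath_memD[OF c E p] by simp
qed

lemma rev_mem_gp_rev: "p \<in> c E \<Longrightarrow> rev p \<in> gp_rev c E"
  unfolding gp_rev_def by blast

lemma is_gpath_gp_rev:
  fixes c :: "('a::uniform_space \<times> 'a) set \<Rightarrow> 'a list set"
  assumes c: "is_gpath x y c"
  shows "is_gpath y x (gp_rev c)"
  unfolding is_gpath_def
proof (intro conjI allI impI)
  fix E :: "('a \<times> 'a) set"
  assume "\<not> ent E"
  with c show "gp_rev c E = {}" unfolding gp_rev_def is_gpath_def by simp
next
  fix E :: "('a \<times> 'a) set"
  assume E: "ent E"
  obtain p where p: "p \<in> c E" using is_gpath_nonempty[OF c E] .
  then have "epath E p" "hd p = x" "last p = y" "p \<noteq> []" using is_gpath_memD[OF c E p] by auto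
  then show "\<exists>r. epath E r \<and> hd r = y \<and> last r = x \<and> gp_rev c E = {s. homot E r s}"
    using gp_rev_eq_homot_class[OF c E p] unfolding homot_class_def
    by (intro exI[of _ "rev p"]) (simp add: hd_rev last_rev)
next
  fix E F :: "('a \<times> 'a) set"
  assume "ent E" "ent F" "F \<subseteq> E"
  then show "gp_rev c F \<subseteq> gp_rev c E" unfolding gp_rev_def using is_gpath_mono[OF c] by blast
qed

lemma gp_cat_gp_rev_cancel:
  fixes \<gamma> :: "('a::uniform_space \<times> 'a) set \<Rightarrow> 'a list set"
  assumes \<gamma>: "is_gpath x y \<gamma>" and \<alpha>: "is_gpath y z \<alpha>"
  shows "gp_cat (gp_rev \<gamma>) (gp_cat \<gamma> \<alpha>) = \<alpha>"
proof (rule is_gpath_eqI[OF is_gpath_gp_cat[OF is_gpath_gp_rev[OF \<gamma>] is_gpath_gp_cat[OF \<gamma> \<alpha>]] \<alpha>])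
  fix E :: "('a \<times> 'a) set"
  assume E: "ent E"
  obtain r p where r: "r \<in> \<gamma> E" and p: "p \<in> \<alpha> E"
    using is_gpath_nonempty[OF \<gamma> E] is_gpath_nonempty[OF \<alpha> E] by metis
  have r': "epath E r" "last r = y" using is_gpath_memD[OF \<gamma> E r] by simp_all
  obtain tp where tp: "p = y # tp" using is_gpath_memD[OF \<alpha> E p] by (cases p) auto
  have rp: "r @ p \<in> gp_cat \<gamma> \<alpha> E" using append_mem_gp_cat[OF \<gamma> \<alpha> E r p] .
  note cat = is_gpath_gp_rev[OF \<gamma>] is_gpath_gp_cat[OF \<gamma> \<alpha>] E rev_mem_gp_rev[of r \<gamma> E, OF r] rp
  have "homot E ([] @ (rev r @ r) @ p) ([] @ [last r] @ p)"
    using homot_append_context[OF homot_rev_append_self[OF ent_refl[OF E] r'(1)], of "[]" p]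
      gp_cat_eq_homot_class[OF cat] by simp
  also have "homot E \<dots> p"
    using homot_remove_repeat[of E "[]" y tp] homot_epath_right[OF calculation] r'(2) tp by simp
  finally have "homot E (rev r @ r @ p) p" by simp
  with append_mem_gp_cat[OF cat] p
  show "\<exists>p \<in> gp_cat (gp_rev \<gamma>) (gp_cat \<gamma> \<alpha>) E. \<exists>q \<in> \<alpha> E. homot E p q" by auto
qed

lemma gp_map_gp_cat:
  fixes f :: "'a::uniform_space \<Rightarrow> 'b::uniform_space"
  assumes f: "generates f" and \<gamma>: "is_gpath x y \<gamma>" and \<alpha>: "is_gpath y z \<alpha>"
  shows "gp_map f (gp_cat \<gamma> \<alpha>) = gp_cat (gp_map f \<gamma>) (gp_map f \<alpha>)"
proof (rule is_gpath_eqI[OF is_gpath_gp_map[OF f is_gpath_gp_cat[OF \<gamma> \<alpha>]]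
      is_gpath_gp_cat[OF is_gpath_gp_map[OF f \<gamma>] is_gpath_gp_map[OF f \<alpha>]]])
  fix F :: "('b \<times> 'b) set"
  assume F: "ent F"
  obtain r p where r: "r \<in> \<gamma> (pre f F)" and p: "p \<in> \<alpha> (pre f F)"
    using is_gpath_nonempty[OF \<gamma> ent_pre[OF f F]] is_gpath_nonempty[OF \<alpha> ent_pre[OF f F]] by metis
  have "map f (r @ p) \<in> gp_map f (gp_cat \<gamma> \<alpha>) F"
    using map_mem_gp_map[OF f is_gpath_gp_cat[OF \<gamma> \<alpha>] F
        append_mem_gp_cat[OF \<gamma> \<alpha> ent_pre[OF f F] r p]] .
  moreover have "map f r @ map f p \<in> gp_cat (gp_map f \<gamma>) (gp_map f \<alpha>) F"
    using append_mem_gp_cat[OF is_gpath_gp_map[OF f \<gamma>] is_gpath_gp_map[OF f \<alpha>] F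
        map_mem_gp_map[OF f \<gamma> F r] map_mem_gp_map[OF f \<alpha> F p]] .
  moreover from calculation(1) have "epath F (map f (r @ p))"
    using is_gpath_memD[OF is_gpath_gp_map[OF f is_gpath_gp_cat[OF \<gamma> \<alpha>]] F] by blast
  then have "homot F (map f (r @ p)) (map f r @ map f p)"
    using homot_refl[of F "map f (r @ p)"] by simp
  ultimately show "\<exists>p \<in> gp_map f (gp_cat \<gamma> \<alpha>) F. \<exists>q \<in> gp_cat (gp_map f \<gamma>) (gp_map f \<alpha>) F. homot F p q"
    by blast
qed

lemma gp_map_gp_rev:
  fixes f :: "'a::uniform_space \<Rightarrow> 'b::uniform_space"
  assumes f: "generates f" and \<gamma>: "is_gpath x y \<gamma>"
  shows "gp_map f (gp_rev \<gamma>) = gp_rev (gp_map f \<gamma>)"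
proof (rule is_gpath_eqI[OF is_gpath_gp_map[OF f is_gpath_gp_rev[OF \<gamma>]]
      is_gpath_gp_rev[OF is_gpath_gp_map[OF f \<gamma>]]])
  fix F :: "('b \<times> 'b) set"
  assume F: "ent F"
  obtain r where r: "r \<in> \<gamma> (pre f F)" using is_gpath_nonempty[OF \<gamma> ent_pre[OF f F]] .
  have "map f (rev r) \<in> gp_map f (gp_rev \<gamma>) F"
    using map_mem_gp_map[OF f is_gpath_gp_rev[OF \<gamma>] F rev_mem_gp_rev[of r \<gamma> "pre f F", OF r]] .
  moreover have "rev (map f r) \<in> gp_rev (gp_map f \<gamma>) F"
    using rev_mem_gp_rev[of _ "gp_map f \<gamma>" F, OF map_mem_gp_map[OF f \<gamma> F r]] .
  moreover from calculation(1) have "epath F (map f (rev r))"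
    using is_gpath_memD[OF is_gpath_gp_map[OF f is_gpath_gp_rev[OF \<gamma>]] F] by blast
  then have "homot F (map f (rev r)) (rev (map f r))"
    using homot_refl[of F "map f (rev r)"] by (simp add: rev_map)
  ultimately show "\<exists>p \<in> gp_map f (gp_rev \<gamma>) F. \<exists>q \<in> gp_rev (gp_map f \<gamma>) F. homot F p q"
    by blast
qed

section \<open>Homotopy of generalized paths\<close>

lemma gp_hom_refl:
  assumes c: "is_gpath x y c" and G: "ent G"
  shows "gp_hom G c c"
proof -
  obtain p where p: "p \<in> c G" using is_gpath_nonempty[OF c G] .
  then have "epath G p" using is_gpath_memD[OF c G] by blast
  then have "ehom G p p" unfolding ehom_def using ent_refl[OF G] homot_pad_ends by blast
  with p show ?thesis unfolding gp_hom_def by blast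
qed

lemma ehom_mono: "ehom G p q \<Longrightarrow> G \<subseteq> G' \<Longrightarrow> ehom G' p q"
  unfolding ehom_def using epath_mono homot_mono by blast

lemma gp_hom_mono:
  assumes "is_gpath x y c" "is_gpath x' y' d" "ent G" "G \<subseteq> G'" "gp_hom G c d"
  shows "gp_hom G' c d"
  using assms is_gpath_mono[OF assms(1,3,4)] is_gpath_mono[OF assms(2,3,4)] ehom_mono
  unfolding gp_hom_def by blast

lemma ehom_map_pre:
  assumes "ehom (pre f F) p q"
  shows "ehom F (map f p) (map f q)"
proof -
  from assms have "epath (pre f F) p" "epath (pre f F) q"
    "(f (hd p), f (hd q)) \<in> F" "(f (last p), f (last q)) \<in> F"
    unfolding ehom_def pre_def by auto
  moreover from this(1,2) have "p \<noteq> []" "q \<noteq> []" by auto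
  moreover have "homot F (map f p) (map f (hd p # q @ [last p]))"
    using assms homot_map_pre unfolding ehom_def by blast
  ultimately show ?thesis
    unfolding ehom_def using epath_map_pre[of f F p] epath_map_pre[of f F q]
    by (simp add: hd_map last_map)
qed

lemma gp_hom_gp_map:
  assumes f: "generates f" and c: "is_gpath x y c" and d: "is_gpath x' y' d" and F: "ent F"
    and "gp_hom (pre f F) c d"
  shows "gp_hom F (gp_map f c) (gp_map f d)"
proof -
  from assms(5) obtain p q where "p \<in> c (pre f F)" "q \<in> d (pre f F)" "ehom (pre f F) p q"
    unfolding gp_hom_def by blast
  then show ?thesis
    unfolding gp_hom_def using map_mem_gp_map[OF f c F] map_mem_gp_map[OF f d F] ehom_map_pre
    by blast
qed

lemma gp_hom_gp_cat:
  assumes \<rho>: "is_gpath x y \<rho>" and a: "is_gpath y z a" and b: "is_gpath y z' b" and G: "ent G"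
    and "gp_hom G a b"
  shows "gp_hom G (gp_cat \<rho> a) (gp_cat \<rho> b)"
proof -
  obtain p q where p: "p \<in> a G" and q: "q \<in> b G" and pq: "ehom G p q"
    using assms(5) unfolding gp_hom_def by blast
  obtain r where r: "r \<in> \<rho> G" using is_gpath_nonempty[OF \<rho> G] .
  have "hd p = y" "p \<noteq> []" using is_gpath_memD[OF a G p] by auto
  have "r \<noteq> []" "last r = y" using is_gpath_memD[OF \<rho> G r] by auto
  obtain tq where tq: "q = y # tq" using is_gpath_memD[OF b G q] by (cases q) auto
  define lp where "lp = last p"
  have rp: "epath G (r @ p)" and rq: "epath G (r @ q)"
    using gp_cat_eq_homot_class[OF \<rho> a G r p] gp_cat_eq_homot_class[OF \<rho> b G r q] by simp_all
  \<comment> \<open>p \<simeq> y # q @ [last p]; prefix r, then trade the doubled y for a doubled first vertex of r.\<close>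
  have "homot G ([] @ r @ p) ([] @ r @ (y # y # tq @ [lp]))"
    using homot_append_context[of G p "y # y # tq @ [lp]" r "[]"] pq rp \<open>hd p = y\<close> tq
    unfolding ehom_def lp_def by simp
  also have "homot G \<dots> (r @ y # tq @ [lp])"
    using homot_remove_repeat[of G r y "tq @ [lp]"] homot_epath_right[OF calculation] by simp
  also have "homot G \<dots> (hd r # r @ y # tq @ [lp])"
    using homot_repeat[of G "[]" "hd r" "tl r @ y # tq @ [lp]"]
      homot_epath_right[OF calculation] ent_refl[OF G]
      list.collapse[OF \<open>r \<noteq> []\<close>]
    by (metis append_Cons append_Nil)
  finally have "homot G (r @ p) (hd (r @ p) # (r @ q) @ [last (r @ p)])"
    using \<open>r \<noteq> []\<close> \<open>p \<noteq> []\<close> \<open>hd p = y\<close> tq unfolding lp_def by simp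
  moreover have "(hd (r @ p), hd (r @ q)) \<in> G" "(last (r @ p), last (r @ q)) \<in> G"
    using ent_refl[OF G] pq \<open>r \<noteq> []\<close> \<open>p \<noteq> []\<close> tq unfolding ehom_def by auto
  ultimately have "ehom G (r @ p) (r @ q)" unfolding ehom_def using rp rq by blast
  then show ?thesis
    unfolding gp_hom_def using append_mem_gp_cat[OF \<rho> a G r p] append_mem_gp_cat[OF \<rho> b G r q] by blast
qed

lemma gp_hom_all_imp_eq:
  fixes \<alpha> \<beta> :: "('a::{uniform_space, t1_space} \<times> 'a) set \<Rightarrow> 'a list set"
  assumes \<alpha>: "is_gpath x0 y1 \<alpha>" and \<beta>: "is_gpath x0 y2 \<beta>" and hom: "\<And>E. ent E \<Longrightarrow> gp_hom E \<alpha> \<beta>"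
  shows "\<alpha> = \<beta>"
proof -
  have ends: "(y1, y2) \<in> E" if E: "ent E" for E
  proof -
    obtain p q where "p \<in> \<alpha> E" "q \<in> \<beta> E" "ehom E p q"
      using hom[OF E] unfolding gp_hom_def by blast
    with E show ?thesis
      using is_gpath_memD[OF \<alpha>] is_gpath_memD[OF \<beta>] unfolding ehom_def by metis
  qed
  have "y1 = y2"
    using ent_separating[of y1 y2] ends by blast
  show ?thesis
  proof (rule is_gpath_eqI[OF \<alpha> \<beta>])
    fix E :: "('a \<times> 'a) set"
    assume E: "ent E"
    obtain p q where pq: "p \<in> \<alpha> E" "q \<in> \<beta> E" "ehom E p q"
      using hom[OF E] unfolding gp_hom_def by blast
    have p: "hd p = x0" "last p = y1" using is_gpath_memD[OF \<alpha> E pq(1)] by simp_all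
    have q: "epath E q" "hd q = x0" "last q = y1" using is_gpath_memD[OF \<beta> E pq(2)] \<open>y1 = y2\<close> by simp_all
    have "homot E p (hd q # q @ [last q])" using pq(3) p q unfolding ehom_def by simp
    moreover have "homot E q (hd q # q @ [last q])" using homot_pad_ends[OF q(1)] ent_refl[OF E] by blast
    ultimately have "homot E p q" using homot_sym homot_trans by blast
    with pq show "\<exists>p \<in> \<alpha> E. \<exists>q \<in> \<beta> E. homot E p q" by blast
  qed
qed

section \<open>Uniform equivalence and the conditions GP1, GP2\<close>

lemma gp_map_GP:
  assumes "generates f"
  shows "gp_map f ` GP x0 \<subseteq> GP (f x0)"
  using is_gpath_gp_map[OF assms] unfolding GP_def by blast

lemma gp_ucont_gp_map:
  fixes f :: "'a::uniform_space \<Rightarrow> 'b::uniform_space"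
  assumes f: "generates f"
  shows "gp_ucont (GP x0) (gp_map f)"
  unfolding gp_ucont_def
proof (intro allI impI)
  fix F :: "('b \<times> 'b) set" assume F: "ent F"
  have "gp_hom F (gp_map f c) (gp_map f d)"
    if "c \<in> GP x0" "d \<in> GP x0" "gp_hom (pre f F) c d" for c d
    using that gp_hom_gp_map[OF f _ _ F] unfolding mem_GP_iff by blast
  with ent_pre[OF f F] show "\<exists>E. ent E \<and>
      (\<forall>c \<in> GP x0. \<forall>d \<in> GP x0. gp_hom E c d \<longrightarrow> gp_hom F (gp_map f c) (gp_map f d))"
    by blast
qed

text \<open>GP2 for a single base point; GP2 itself asks for one F serving all base points.\<close>

definition GP2_at :: "('a::uniform_space \<Rightarrow> 'b::uniform_space) \<Rightarrow> 'a \<Rightarrow> bool" where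
  "GP2_at f x0 \<longleftrightarrow> (\<forall>E. ent E \<longrightarrow> (\<exists>F. ent F \<and> (\<forall>\<alpha> \<in> GP x0. \<forall>\<beta> \<in> GP x0.
     gp_hom (pimg f F) (gp_map f \<alpha>) (gp_map f \<beta>) \<longrightarrow> gp_hom E \<alpha> \<beta>)))"

lemma GP2_imp_GP2_at: "GP2 f \<Longrightarrow> GP2_at f x0"
  unfolding GP2_def GP2_at_def by blast

lemma inj_on_gp_map:
  fixes f :: "'a::{uniform_space, t1_space} \<Rightarrow> 'b::uniform_space"
  assumes f: "generates f" and "GP2_at f x0"
  shows "inj_on (gp_map f) (GP x0)"
proof (rule inj_onI)
  fix c d assume c: "c \<in> GP x0" and d: "d \<in> GP x0" and cd: "gp_map f c = gp_map f d"
  obtain y1 y2 where cy: "is_gpath x0 y1 c" and dy: "is_gpath x0 y2 d"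
    using c d unfolding mem_GP_iff by blast
  show "c = d"
  proof (rule gp_hom_all_imp_eq[OF cy dy])
    fix E :: "('a \<times> 'a) set" assume "ent E"
    with assms(2) obtain F where F: "ent F" and hom: "\<forall>\<alpha> \<in> GP x0. \<forall>\<beta> \<in> GP x0.
        gp_hom (pimg f F) (gp_map f \<alpha>) (gp_map f \<beta>) \<longrightarrow> gp_hom E \<alpha> \<beta>"
      unfolding GP2_at_def by blast
    have "gp_hom (pimg f F) (gp_map f c) (gp_map f d)"
      using gp_hom_refl[OF is_gpath_gp_map[OF f cy] ent_pimg[OF f F]] cd by simp
    with hom c d show "gp_hom E c d" by blast
  qed
qed

lemma gp_uequiv_gp_map:
  fixes f :: "'a::{uniform_space, t1_space} \<Rightarrow> 'b::uniform_space"
  assumes f: "generates f" and surj: "GP (f x0) \<subseteq> gp_map f ` GP x0" and GP2: "GP2_at f x0"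
  shows "gp_uequiv (GP x0) (GP (f x0)) (gp_map f)"
proof -
  define h where "h = inv_into (GP x0) (gp_map f)"
  have h_into: "h d \<in> GP x0" and h_right: "gp_map f (h d) = d" if "d \<in> GP (f x0)" for d
    using surj that inv_into_into[of d "gp_map f" "GP x0"] f_inv_into_f[of d "gp_map f" "GP x0"]
    unfolding h_def by auto
  have h_left: "h (gp_map f c) = c" if "c \<in> GP x0" for c
    using inv_into_f_f[OF inj_on_gp_map[OF f GP2] that] unfolding h_def .
  have "gp_ucont (GP (f x0)) h"
    unfolding gp_ucont_def
  proof (intro allI impI)
    fix E :: "('a \<times> 'a) set" assume "ent E"
    with GP2 obtain F where F: "ent F" and hom: "\<forall>\<alpha> \<in> GP x0. \<forall>\<beta> \<in> GP x0.
        gp_hom (pimg f F) (gp_map f \<alpha>) (gp_map f \<beta>) \<longrightarrow> gp_hom E \<alpha> \<beta>"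
      unfolding GP2_at_def by blast
    have "gp_hom E (h c) (h d)" if "c \<in> GP (f x0)" "d \<in> GP (f x0)" "gp_hom (pimg f F) c d" for c d
    proof -
      have "gp_hom (pimg f F) (gp_map f (h c)) (gp_map f (h d))"
        using that(3) h_right[OF that(1)] h_right[OF that(2)] by simp
      with hom h_into[OF that(1)] h_into[OF that(2)] show ?thesis by blast
    qed
    with ent_pimg[OF f F] show "\<exists>F'. ent F' \<and>
        (\<forall>c \<in> GP (f x0). \<forall>d \<in> GP (f x0). gp_hom F' c d \<longrightarrow> gp_hom E (h c) (h d))"
      by blast
  qed
  moreover have "h ` GP (f x0) \<subseteq> GP x0" using h_into by blast
  ultimately show ?thesis
    unfolding gp_uequiv_def using gp_map_GP[OF f] gp_ucont_gp_map[OF f] h_left h_right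
    by blast
qed

lemma GP1_iff_surj: "GP1 f \<longleftrightarrow> (\<forall>x0. GP (f x0) \<subseteq> gp_map f ` GP x0)"
  unfolding GP1_def subset_iff image_iff by (simp add: eq_commute Ball_def)

lemma GP1_if_surj_at:
  fixes f :: "'a::uniform_space \<Rightarrow> 'b::uniform_space"
  assumes f: "generates f" and j: "joinable TYPE('a)" and surj: "GP (f x1) \<subseteq> gp_map f ` GP x1"
  shows "GP1 f"
  unfolding GP1_def
proof (intro allI ballI)
  fix x0 c assume "c \<in> GP (f x0)"
  then obtain y where c: "is_gpath (f x0) y c" unfolding mem_GP_iff by blast
  obtain \<gamma> where \<gamma>: "is_gpath x1 x0 \<gamma>" using j unfolding joinable_def by blast
  have "gp_cat (gp_map f \<gamma>) c \<in> GP (f x1)"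
    using is_gpath_gp_cat[OF is_gpath_gp_map[OF f \<gamma>] c] unfolding mem_GP_iff by blast
  with surj obtain d' where "d' \<in> GP x1" and fd': "gp_map f d' = gp_cat (gp_map f \<gamma>) c"
    by (auto simp only: subset_iff image_iff)
  then obtain z where d': "is_gpath x1 z d'" unfolding mem_GP_iff by blast
  have "gp_map f (gp_cat (gp_rev \<gamma>) d') = gp_cat (gp_rev (gp_map f \<gamma>)) (gp_cat (gp_map f \<gamma>) c)"
    using gp_map_gp_cat[OF f is_gpath_gp_rev[OF \<gamma>] d'] gp_map_gp_rev[OF f \<gamma>] fd' by simp
  also have "\<dots> = c" using gp_cat_gp_rev_cancel[OF is_gpath_gp_map[OF f \<gamma>] c] .
  finally have "gp_map f (gp_cat (gp_rev \<gamma>) d') = c" .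
  moreover have "gp_cat (gp_rev \<gamma>) d' \<in> GP x0"
    using is_gpath_gp_cat[OF is_gpath_gp_rev[OF \<gamma>] d'] unfolding mem_GP_iff by blast
  ultimately show "\<exists>d \<in> GP x0. gp_map f d = c" by blast
qed

lemma gp_uequiv_imp_surj:
  assumes "gp_uequiv S T g"
  shows "T \<subseteq> g ` S"
proof
  fix d assume "d \<in> T"
  from assms obtain h where "h ` T \<subseteq> S" "\<forall>d \<in> T. g (h d) = d" unfolding gp_uequiv_def by blast
  with \<open>d \<in> T\<close> have "h d \<in> S" "d = g (h d)" by auto
  then show "d \<in> g ` S" by blast
qed

lemma gp_uequiv_imp_GP2_at:
  fixes f :: "'a::uniform_space \<Rightarrow> 'b::uniform_space"
  assumes f: "generates f" and "gp_uequiv (GP x1) (GP (f x1)) (gp_map f)"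
  shows "GP2_at f x1"
  unfolding GP2_at_def
proof (intro allI impI)
  fix E :: "('a \<times> 'a) set" assume "ent E"
  from assms(2) obtain h where h_left: "\<forall>c \<in> GP x1. h (gp_map f c) = c"
    and "gp_ucont (GP (f x1)) h"
    unfolding gp_uequiv_def by blast
  with \<open>ent E\<close> obtain E' where "ent E'"
    and h_hom: "\<forall>c \<in> GP (f x1). \<forall>d \<in> GP (f x1). gp_hom E' c d \<longrightarrow> gp_hom E (h c) (h d)"
    unfolding gp_ucont_def by blast
  with f obtain F where F: "ent F" "pimg f F \<subseteq> E'" unfolding generates_def by blast
  have "gp_hom E \<alpha> \<beta>"
    if mem: "\<alpha> \<in> GP x1" "\<beta> \<in> GP x1"
      and hom_img: "gp_hom (pimg f F) (gp_map f \<alpha>) (gp_map f \<beta>)" for \<alpha> \<beta>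
  proof -
    obtain y z where \<alpha>: "is_gpath x1 y \<alpha>" and \<beta>: "is_gpath x1 z \<beta>"
      using mem unfolding mem_GP_iff by blast
    have "gp_hom E' (gp_map f \<alpha>) (gp_map f \<beta>)"
      using gp_hom_mono[OF is_gpath_gp_map[OF f \<alpha>] is_gpath_gp_map[OF f \<beta>] ent_pimg[OF f F(1)] F(2)]
        hom_img .
    moreover have "gp_map f \<alpha> \<in> GP (f x1)" "gp_map f \<beta> \<in> GP (f x1)"
      using gp_map_GP[OF f] mem by blast+
    ultimately have "gp_hom E (h (gp_map f \<alpha>)) (h (gp_map f \<beta>))" using h_hom by blast
    with h_left mem show ?thesis by simp
  qed
  with F(1) show "\<exists>F. ent F \<and> (\<forall>\<alpha> \<in> GP x1. \<forall>\<beta> \<in> GP x1.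
      gp_hom (pimg f F) (gp_map f \<alpha>) (gp_map f \<beta>) \<longrightarrow> gp_hom E \<alpha> \<beta>)"
    by blast
qed

lemma GP2_if_GP2_at:
  fixes f :: "'a::uniform_space \<Rightarrow> 'b::uniform_space"
  assumes f: "generates f" and j: "joinable TYPE('a)" and "GP2_at f x1"
  shows "GP2 f"
  unfolding GP2_def
proof (intro allI impI)
  fix E :: "('a \<times> 'a) set" assume E: "ent E"
  with assms(3) obtain F where F: "ent F" and hom: "\<forall>A \<in> GP x1. \<forall>B \<in> GP x1.
      gp_hom (pimg f F) (gp_map f A) (gp_map f B) \<longrightarrow> gp_hom E A B"
    unfolding GP2_at_def by blast
  have "gp_hom E \<alpha> \<beta>"
    if mem: "\<alpha> \<in> GP x0" "\<beta> \<in> GP x0"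
      and hom_img: "gp_hom (pimg f F) (gp_map f \<alpha>) (gp_map f \<beta>)" for x0 \<alpha> \<beta>
  proof -
    obtain y z where \<alpha>: "is_gpath x0 y \<alpha>" and \<beta>: "is_gpath x0 z \<beta>"
      using mem unfolding mem_GP_iff by blast
    obtain \<gamma> where \<gamma>: "is_gpath x1 x0 \<gamma>" using j unfolding joinable_def by blast
    have "gp_hom (pimg f F) (gp_cat (gp_map f \<gamma>) (gp_map f \<alpha>)) (gp_cat (gp_map f \<gamma>) (gp_map f \<beta>))"
      using gp_hom_gp_cat[OF is_gpath_gp_map[OF f \<gamma>] is_gpath_gp_map[OF f \<alpha>]
          is_gpath_gp_map[OF f \<beta>] ent_pimg[OF f F] hom_img] .
    then have "gp_hom (pimg f F) (gp_map f (gp_cat \<gamma> \<alpha>)) (gp_map f (gp_cat \<gamma> \<beta>))"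
      using gp_map_gp_cat[OF f \<gamma> \<alpha>] gp_map_gp_cat[OF f \<gamma> \<beta>] by simp
    moreover have "gp_cat \<gamma> \<alpha> \<in> GP x1" "gp_cat \<gamma> \<beta> \<in> GP x1"
      using is_gpath_gp_cat[OF \<gamma> \<alpha>] is_gpath_gp_cat[OF \<gamma> \<beta>] unfolding mem_GP_iff by blast+
    ultimately have "gp_hom E (gp_cat \<gamma> \<alpha>) (gp_cat \<gamma> \<beta>)" using hom by blast
    then have "gp_hom E (gp_cat (gp_rev \<gamma>) (gp_cat \<gamma> \<alpha>)) (gp_cat (gp_rev \<gamma>) (gp_cat \<gamma> \<beta>))"
      by (rule gp_hom_gp_cat[OF is_gpath_gp_rev[OF \<gamma>] is_gpath_gp_cat[OF \<gamma> \<alpha>]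
            is_gpath_gp_cat[OF \<gamma> \<beta>] E])
    then show ?thesis using gp_cat_gp_rev_cancel[OF \<gamma> \<alpha>] gp_cat_gp_rev_cancel[OF \<gamma> \<beta>] by simp
  qed
  with F show "\<exists>F. ent F \<and> (\<forall>x0. \<forall>\<alpha> \<in> GP x0. \<forall>\<beta> \<in> GP x0.
      gp_hom (pimg f F) (gp_map f \<alpha>) (gp_map f \<beta>) \<longrightarrow> gp_hom E \<alpha> \<beta>)"
    by blast
qed

lemma gp_uequiv_if_GP1_GP2:
  fixes f :: "'a::{uniform_space, t1_space} \<Rightarrow> 'b::uniform_space"
  assumes "generates f" "GP1 f" "GP2 f"
  shows "gp_uequiv (GP x0) (GP (f x0)) (gp_map f)"
  using gp_uequiv_gp_map[OF assms(1)] assms(2,3) GP1_iff_surj GP2_imp_GP2_at by blast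

lemma GP1_GP2_if_gp_uequiv:
  fixes f :: "'a::uniform_space \<Rightarrow> 'b::uniform_space"
  assumes "generates f" "joinable TYPE('a)" "gp_uequiv (GP x1) (GP (f x1)) (gp_map f)"
  shows "GP1 f \<and> GP2 f"
  using GP1_if_surj_at[OF assms(1,2) gp_uequiv_imp_surj[OF assms(3)]]
    GP2_if_GP2_at[OF assms(1,2) gp_uequiv_imp_GP2_at[OF assms(1,3)]] by blast

theorem mainTheorem12:
  fixes f :: "'a::{uniform_space, t2_space} \<Rightarrow> 'b::{uniform_space, t2_space}"
  assumes "generates f"
  shows "(GP1 f \<and> GP2 f \<longrightarrow> (\<forall>x0. gp_uequiv (GP x0) (GP (f x0)) (gp_map f)))
     \<and> (joinable TYPE('a) \<and> (\<exists>x1. gp_uequiv (GP x1) (GP (f x1)) (gp_map f))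
          \<longrightarrow> GP1 f \<and> GP2 f)"
  using gp_uequiv_if_GP1_GP2[OF assms] GP1_GP2_if_gp_uequiv[OF assms] by blast

end
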